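(* For every $\lambda>0$, the function $F_\lambda(e)=F(\lambda,e)$ is strictly convex on $I_\lambda$; indeed $\partial_{ee}^2F(\lambda,e)>0$ for all $e\in I_\lambda$.
   Context: Let $\gamma>0$; let $a_1,\dots,a_p>0$ with weights $\omega_i>0$, $\sum_i\omega_i=1$, and $b_1,\dots,b_n>0$ with weights $\pi_j>0$, $\sum_j\pi_j=1$; put $a^*=\max_i a_i$, $b^*=\max_j b_j$. Define $G(e)=\sum_{j=1}^n\frac{b_j\pi_j}{1+\gamma b_j e}$, $J=\{e: e>-1/(\gamma b^* )\}$, and for $\lambda>0$, $I_\lambda=\{e\in J: G(e)<\lambda/a^*\}$. Define $F(\lambda,e)=e-\sum_{i=1}^p\frac{a_i\omega_i}{a_iG(e)-\lambda}$. *)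

theory Defs
  imports "HOL-Analysis.Analysis"
begin

definition strict_convex_on :: "real set \<Rightarrow> (real \<Rightarrow> real) \<Rightarrow> bool" where
  "strict_convex_on S f \<longleftrightarrow> convex S \<and>
     (\<forall>x\<in>S. \<forall>y\<in>S. x \<noteq> y \<longrightarrow> (\<forall>u::real. 0 < u \<and> u < 1 \<longrightarrow>
        f (u * x + (1 - u) * y) < u * f x + (1 - u) * f y))"

definition Gfun :: "real \<Rightarrow> nat \<Rightarrow> (nat \<Rightarrow> real) \<Rightarrow> (nat \<Rightarrow> real) \<Rightarrow> real \<Rightarrow> real" where
  "Gfun \<gamma> n b \<pi> e = (\<Sum>j=1..n. b j * \<pi> j / (1 + \<gamma> * b j * e))"

definition Jset :: "real \<Rightarrow> nat \<Rightarrow> (nat \<Rightarrow> real) \<Rightarrow> real set" where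
  "Jset \<gamma> n b = {e. e > - 1 / (\<gamma> * Max (b ` {1..n}))}"

definition Iset :: "real \<Rightarrow> nat \<Rightarrow> (nat \<Rightarrow> real) \<Rightarrow> nat \<Rightarrow> (nat \<Rightarrow> real) \<Rightarrow> (nat \<Rightarrow> real)
    \<Rightarrow> real \<Rightarrow> real set" where
  "Iset \<gamma> p a n b \<pi> lam = {e \<in> Jset \<gamma> n b. Gfun \<gamma> n b \<pi> e < lam / Max (a ` {1..p})}"

definition Ffun :: "real \<Rightarrow> nat \<Rightarrow> (nat \<Rightarrow> real) \<Rightarrow> (nat \<Rightarrow> real) \<Rightarrow> nat \<Rightarrow> (nat \<Rightarrow> real)
    \<Rightarrow> (nat \<Rightarrow> real) \<Rightarrow> real \<Rightarrow> real \<Rightarrow> real" where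
  "Ffun \<gamma> p a \<omega> n b \<pi> lam e =
     e - (\<Sum>i=1..p. a i * \<omega> i / (a i * Gfun \<gamma> n b \<pi> e - lam))"

end

theory Submission
  imports Defs
begin

text \<open>Each summand b_j \<pi>_j / (1 + \<gamma> b_j e) of G is positive, decreasing and strictly convex
  on J. On I_\<lambda> the functions h_i = a_i G - \<lambda> are therefore negative (as a_i G \<le> a* G < \<lambda>)
  and strictly convex, and -1/h is strictly convex wherever h is negative and strictly convex.
  Thus F_\<lambda>, which is e plus a positive combination of the -1/h_i, has positive second
  derivative on I_\<lambda>; and I_\<lambda> is an open interval, because G is continuous and decreasing.\<close>

lemma convex_real_between:
  fixes S :: "real set"
  assumes "convex S" "x \<in> S" "y \<in> S" "x \<le> z" "z \<le> y"
  shows "z \<in> S"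
  using assms unfolding is_interval_convex_1[symmetric] is_interval_1 by blast

lemma strict_convex_on_linorderI:
  assumes "convex S"
    and "\<And>u x y. 0 < u \<Longrightarrow> u < 1 \<Longrightarrow> x \<in> S \<Longrightarrow> y \<in> S \<Longrightarrow> x < y \<Longrightarrow>
           f (u * x + (1 - u) * y) < u * f x + (1 - u) * f y"
  shows "strict_convex_on S f"
  unfolding strict_convex_on_def
proof (intro conjI \<open>convex S\<close> ballI impI allI)
  fix x y u :: real
  assume xy: "x \<in> S" "y \<in> S" "x \<noteq> y" and u: "0 < u \<and> u < 1"
  show "f (u * x + (1 - u) * y) < u * f x + (1 - u) * f y"
  proof (cases "x < y")
    case True
    with assms(2) xy u show ?thesis by blast
  next
    case False
    with xy have "y < x" by simp
    from assms(2)[OF _ _ \<open>y \<in> S\<close> \<open>x \<in> S\<close> this, of "1 - u"] u show ?thesis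
      by (simp add: algebra_simps)
  qed
qed

lemma strict_convex_on_realI:
  assumes "convex S"
    and f': "\<And>x. x \<in> S \<Longrightarrow> (f has_real_derivative f' x) (at x)"
    and mono: "\<And>x y. x \<in> S \<Longrightarrow> y \<in> S \<Longrightarrow> x < y \<Longrightarrow> f' x < f' y"
  shows "strict_convex_on S f"
proof (rule strict_convex_on_linorderI[OF \<open>convex S\<close>])
  fix u x y :: real
  assume u: "0 < u" "u < 1" and xy: "x \<in> S" "y \<in> S" "x < y"
  define z where "z = u * x + (1 - u) * y"
  have z_x: "z - x = (1 - u) * (y - x)" and y_z: "y - z = u * (y - x)"
    by (simp_all add: z_def algebra_simps)
  have "x < z"
    using z_x u xy by (smt (verit) mult_pos_pos)
  have "z < y"
    using y_z u xy by (smt (verit) mult_pos_pos)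
  have between: "t \<in> S" if "x \<le> t" "t \<le> y" for t
    using convex_real_between[OF \<open>convex S\<close> xy(1,2) that] .
  have "\<exists>\<xi>. x < \<xi> \<and> \<xi> < z \<and> f z - f x = (z - x) * f' \<xi>"
    using \<open>x < z\<close> \<open>z < y\<close> by (intro MVT2) (auto intro!: f' between)
  then obtain \<xi> where \<xi>: "x < \<xi>" "\<xi> < z" "f z - f x = (z - x) * f' \<xi>"
    by blast
  have "\<exists>\<eta>. z < \<eta> \<and> \<eta> < y \<and> f y - f z = (y - z) * f' \<eta>"
    using \<open>x < z\<close> \<open>z < y\<close> by (intro MVT2) (auto intro!: f' between)
  then obtain \<eta> where \<eta>: "z < \<eta>" "\<eta> < y" "f y - f z = (y - z) * f' \<eta>"
    by blast
  have "f' \<xi> < f' \<eta>"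
    using \<xi> \<eta> by (intro mono between) auto
  have "f z - (u * f x + (1 - u) * f y) = u * (f z - f x) - (1 - u) * (f y - f z)"
    by (simp add: algebra_simps)
  also have "\<dots> = u * (1 - u) * (y - x) * (f' \<xi> - f' \<eta>)"
    unfolding \<xi>(3) \<eta>(3) z_x y_z by (simp add: algebra_simps)
  also have "\<dots> < 0"
    using \<open>f' \<xi> < f' \<eta>\<close> u xy by (intro mult_pos_neg) auto
  finally show "f z < u * f x + (1 - u) * f y"
    by simp
qed

lemma strict_convex_on_second_derivI:
  assumes "convex S"
    and "\<And>x. x \<in> S \<Longrightarrow> (f has_real_derivative f' x) (at x)"
    and f'': "\<And>x. x \<in> S \<Longrightarrow> (f' has_real_derivative f'' x) (at x)"
    and pos: "\<And>x. x \<in> S \<Longrightarrow> f'' x > 0"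
  shows "strict_convex_on S f"
proof (rule strict_convex_on_realI[OF assms(1,2)])
  fix x y assume "x \<in> S" "y \<in> S" "x < y"
  then show "f' x < f' y"
    using convex_real_between[OF \<open>convex S\<close> \<open>x \<in> S\<close> \<open>y \<in> S\<close>] f'' pos
    by (intro DERIV_pos_imp_increasing[OF \<open>x < y\<close>]) blast
qed

lemma deriv_deriv_eqI:
  assumes "open S" "x \<in> S"
    and "\<And>y. y \<in> S \<Longrightarrow> (f has_real_derivative f' y) (at y)"
    and "(f' has_real_derivative f'') (at x)"
  shows "deriv (deriv f) x = f''"
proof -
  have "\<forall>\<^sub>F y in nhds x. deriv f y = f' y"
    using eventually_nhds_in_open[OF assms(1,2)]
    by eventually_elim (use assms(3) DERIV_imp_deriv in blast)
  then have "deriv (deriv f) x = deriv f' x"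
    by (rule deriv_cong_ev) simp
  also have "\<dots> = f''"
    using assms(4) by (rule DERIV_imp_deriv)
  finally show ?thesis .
qed

lemma has_real_derivative_const_divide:
  assumes "(h has_real_derivative h') (at x)" "h x \<noteq> 0"
  shows "((\<lambda>y. c / h y) has_real_derivative - c * h' / (h x)^2) (at x)"
  using assms by (auto intro!: derivative_eq_intros simp: field_simps power2_eq_square)

lemma has_real_derivative_divide_square:
  assumes "(g has_real_derivative g') (at x)" "(h has_real_derivative h') (at x)" "h x \<noteq> 0"
  shows "((\<lambda>y. g y / (h y)^2) has_real_derivative g' / (h x)^2 - 2 * g x * h' / (h x)^3) (at x)"
  using assms
  by (auto intro!: derivative_eq_intros simp: field_simps power2_eq_square power3_eq_cube)

text \<open>The right-hand side is (-1/h)'' for a function h with derivatives h' and h''.\<close>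
lemma neg_inverse_second_deriv_pos:
  fixes h h' h'' :: real
  assumes "h < 0" "0 < h''"
  shows "0 < h'' / h^2 - 2 * h' * h' / h^3"
proof -
  have "0 < h'' / h^2"
    using assms by simp
  moreover have "2 * h' * h' / h^3 \<le> 0"
    using \<open>h < 0\<close> by (intro divide_nonneg_neg) (simp_all add: odd_power_less_zero)
  ultimately show ?thesis
    by linarith
qed

locale mixture_parameters =
  fixes \<gamma> :: real and p n :: nat and a \<omega> b \<pi> :: "nat \<Rightarrow> real"
  assumes gamma_pos: "0 < \<gamma>"
    and a_pos: "\<And>i. i \<in> {1..p} \<Longrightarrow> 0 < a i"
    and omega_pos: "\<And>i. i \<in> {1..p} \<Longrightarrow> 0 < \<omega> i"
    and omega_sum: "(\<Sum>i=1..p. \<omega> i) = 1"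
    and b_pos: "\<And>j. j \<in> {1..n} \<Longrightarrow> 0 < b j"
    and pi_pos: "\<And>j. j \<in> {1..n} \<Longrightarrow> 0 < \<pi> j"
    and pi_sum: "(\<Sum>j=1..n. \<pi> j) = 1"
begin

abbreviation J :: "real set" where "J \<equiv> Jset \<gamma> n b"
abbreviation G :: "real \<Rightarrow> real" where "G \<equiv> Gfun \<gamma> n b \<pi>"
abbreviation I :: "real \<Rightarrow> real set" where "I lam \<equiv> Iset \<gamma> p a n b \<pi> lam"
abbreviation F :: "real \<Rightarrow> real \<Rightarrow> real" where "F lam \<equiv> Ffun \<gamma> p a \<omega> n b \<pi> lam"

definition G' :: "real \<Rightarrow> real" where
  "G' e = (\<Sum>j=1..n. - \<gamma> * b j ^ 2 * \<pi> j / (1 + \<gamma> * b j * e)^2)"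

definition G'' :: "real \<Rightarrow> real" where
  "G'' e = (\<Sum>j=1..n. 2 * \<gamma>^2 * b j ^ 3 * \<pi> j / (1 + \<gamma> * b j * e)^3)"

definition F' :: "real \<Rightarrow> real \<Rightarrow> real" where
  "F' lam e = 1 + (\<Sum>i=1..p. a i * \<omega> i * (a i * G' e / (a i * G e - lam)^2))"

definition F'' :: "real \<Rightarrow> real \<Rightarrow> real" where
  "F'' lam e = (\<Sum>i=1..p. a i * \<omega> i *
     (a i * G'' e / (a i * G e - lam)^2 - 2 * (a i * G' e) * (a i * G' e) / (a i * G e - lam)^3))"

lemma indices_nonempty: "{1..p} \<noteq> {}" "{1..n} \<noteq> {}"
  using omega_sum pi_sum by (metis sum.empty zero_neq_one)+

lemma Jset_eq: "J = {- 1 / (\<gamma> * Max (b ` {1..n}))<..}"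
  unfolding Jset_def by auto

lemma open_Jset: "open J"
  unfolding Jset_eq by simp

lemma denominator_pos:
  assumes "e \<in> J" "j \<in> {1..n}"
  shows "0 < 1 + \<gamma> * b j * e"
proof (cases "0 \<le> e")
  case True
  then have "0 \<le> \<gamma> * b j * e"
    using gamma_pos b_pos[OF assms(2)] by simp
  then show ?thesis
    by simp
next
  case False
  define b_max where "b_max = Max (b ` {1..n})"
  have "b j \<le> b_max"
    using assms(2) by (simp add: b_max_def)
  with b_pos[OF assms(2)] have "0 < b_max"
    by linarith
  with \<open>e \<in> J\<close> gamma_pos have "-1 < \<gamma> * (b_max * e)"
    by (simp add: Jset_def b_max_def field_simps)
  also have "\<dots> \<le> \<gamma> * (b j * e)"
    using False \<open>b j \<le> b_max\<close> gamma_pos by (intro mult_left_mono mult_right_mono_neg) auto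
  finally show ?thesis
    by (simp add: mult.assoc)
qed

lemma Gfun_has_real_derivative:
  assumes "e \<in> J"
  shows "(G has_real_derivative G' e) (at e)"
  unfolding Gfun_def[abs_def] G'_def
proof (rule DERIV_sum)
  fix j assume "j \<in> {1..n}"
  with denominator_pos[OF assms this]
  show "((\<lambda>x. b j * \<pi> j / (1 + \<gamma> * b j * x)) has_real_derivative
      - \<gamma> * b j ^ 2 * \<pi> j / (1 + \<gamma> * b j * e)^2) (at e)"
    by (auto intro!: derivative_eq_intros simp: field_simps power2_eq_square)
qed

lemma G'_has_real_derivative:
  assumes "e \<in> J"
  shows "(G' has_real_derivative G'' e) (at e)"
  unfolding G'_def[abs_def] G''_def
proof (rule DERIV_sum)
  fix j assume "j \<in> {1..n}"
  define h where "h x = 1 + \<gamma> * b j * x" for x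
  have "(h has_real_derivative \<gamma> * b j) (at e)"
    unfolding h_def by (auto intro!: derivative_eq_intros)
  moreover have "0 < h e"
    unfolding h_def using denominator_pos[OF assms \<open>j \<in> {1..n}\<close>] .
  ultimately have "((\<lambda>x. - \<gamma> * b j ^ 2 * \<pi> j / (h x)^2) has_real_derivative
      2 * \<gamma>^2 * b j ^ 3 * \<pi> j / (h e)^3) (at e)"
    by (auto intro!: derivative_eq_intros
        simp: field_simps power2_eq_square power3_eq_cube)
  then show "((\<lambda>x. - \<gamma> * b j ^ 2 * \<pi> j / (1 + \<gamma> * b j * x)^2) has_real_derivative
      2 * \<gamma>^2 * b j ^ 3 * \<pi> j / (1 + \<gamma> * b j * e)^3) (at e)"
    by (simp only: h_def)
qed

lemma Gfun_nonneg: "e \<in> J \<Longrightarrow> 0 \<le> G e"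
  unfolding Gfun_def using denominator_pos b_pos pi_pos
  by (intro sum_nonneg) (simp add: less_imp_le)

lemma G''_pos: "e \<in> J \<Longrightarrow> 0 < G'' e"
  unfolding G''_def using denominator_pos b_pos pi_pos gamma_pos indices_nonempty(2)
  by (intro sum_pos) auto

lemma Gfun_antimono:
  assumes "x \<in> J" "x \<le> y"
  shows "G y \<le> G x"
  unfolding Gfun_def
proof (rule sum_mono)
  fix j assume j: "j \<in> {1..n}"
  have "1 + \<gamma> * b j * x \<le> 1 + \<gamma> * b j * y"
    using assms gamma_pos b_pos[OF j] by simp
  then show "b j * \<pi> j / (1 + \<gamma> * b j * y) \<le> b j * \<pi> j / (1 + \<gamma> * b j * x)"
    using denominator_pos[OF assms(1) j] b_pos[OF j] pi_pos[OF j]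
    by (intro divide_left_mono) auto
qed

lemma Iset_subset_Jset: "I lam \<subseteq> J"
  unfolding Iset_def by auto

lemma open_Iset: "open (I lam)"
proof -
  have "continuous_on J G"
    using Gfun_has_real_derivative by (meson DERIV_isCont continuous_at_imp_continuous_on)
  moreover have "I lam = J \<inter> G -` {..< lam / Max (a ` {1..p})}"
    unfolding Iset_def by auto
  ultimately show ?thesis
    using continuous_open_preimage[OF _ open_Jset open_lessThan] by simp
qed

lemma convex_Iset: "convex (I lam)"
  unfolding is_interval_convex_1[symmetric] is_interval_1
proof (intro ballI allI impI)
  fix x y z assume "x \<in> I lam" "y \<in> I lam" and between: "x \<le> z \<and> z \<le> y"
  then have "x \<in> J" "z \<in> J"
    by (auto simp: Iset_def Jset_def)
  with between have "G z \<le> G x"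
    using Gfun_antimono by blast
  with \<open>x \<in> I lam\<close> \<open>z \<in> J\<close> show "z \<in> I lam"
    by (auto simp: Iset_def)
qed

lemma Iset_denominator_neg:
  assumes "e \<in> I lam" "i \<in> {1..p}"
  shows "a i * G e - lam < 0"
proof -
  define a_max where "a_max = Max (a ` {1..p})"
  have "a i \<le> a_max"
    using assms(2) by (simp add: a_max_def)
  with a_pos[OF assms(2)] have "0 < a_max"
    by linarith
  moreover have "G e < lam / a_max" "0 \<le> G e"
    using assms(1) Gfun_nonneg by (auto simp: Iset_def a_max_def)
  ultimately have "a_max * G e < lam"
    by (simp add: field_simps)
  moreover have "a i * G e \<le> a_max * G e"
    using \<open>a i \<le> a_max\<close> \<open>0 \<le> G e\<close> by (rule mult_right_mono)
  ultimately show ?thesis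
    by linarith
qed

lemma Ffun_has_real_derivative:
  assumes "e \<in> I lam"
  shows "(F lam has_real_derivative F' lam e) (at e)"
proof -
  have "e \<in> J"
    using assms Iset_subset_Jset by blast
  have "((\<lambda>x. \<Sum>i=1..p. a i * \<omega> i / (a i * G x - lam)) has_real_derivative
      (\<Sum>i=1..p. - (a i * \<omega> i) * (a i * G' e) / (a i * G e - lam)^2)) (at e)"
  proof (rule DERIV_sum)
    fix i assume i: "i \<in> {1..p}"
    have "((\<lambda>x. a i * G x - lam) has_real_derivative a i * G' e) (at e)"
      using Gfun_has_real_derivative[OF \<open>e \<in> J\<close>] by (auto intro!: derivative_eq_intros)
    from has_real_derivative_const_divide[OF this] Iset_denominator_neg[OF assms i]
    show "((\<lambda>x. a i * \<omega> i / (a i * G x - lam)) has_real_derivative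
        - (a i * \<omega> i) * (a i * G' e) / (a i * G e - lam)^2) (at e)"
      by simp
  qed
  from DERIV_diff[OF DERIV_ident this] show ?thesis
    unfolding Ffun_def[abs_def] F'_def by (simp add: sum_negf)
qed

lemma F'_has_real_derivative:
  assumes "e \<in> I lam"
  shows "(F' lam has_real_derivative F'' lam e) (at e)"
proof -
  have "e \<in> J"
    using assms Iset_subset_Jset by blast
  have "((\<lambda>x. \<Sum>i=1..p. a i * \<omega> i * (a i * G' x / (a i * G x - lam)^2))
      has_real_derivative F'' lam e) (at e)"
    unfolding F''_def
  proof (intro DERIV_sum DERIV_cmult)
    fix i assume i: "i \<in> {1..p}"
    have "((\<lambda>x. a i * G' x) has_real_derivative a i * G'' e) (at e)"
      using G'_has_real_derivative[OF \<open>e \<in> J\<close>] by (rule DERIV_cmult)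
    moreover have "((\<lambda>x. a i * G x - lam) has_real_derivative a i * G' e) (at e)"
      using Gfun_has_real_derivative[OF \<open>e \<in> J\<close>] by (auto intro!: derivative_eq_intros)
    ultimately show "((\<lambda>x. a i * G' x / (a i * G x - lam)^2) has_real_derivative
        a i * G'' e / (a i * G e - lam)^2
          - 2 * (a i * G' e) * (a i * G' e) / (a i * G e - lam)^3) (at e)"
      using Iset_denominator_neg[OF assms i] by (intro has_real_derivative_divide_square) auto
  qed
  from DERIV_add[OF DERIV_const[of 1] this] show ?thesis
    unfolding F'_def[abs_def] by simp
qed

lemma F''_pos:
  assumes "e \<in> I lam"
  shows "0 < F'' lam e"
  unfolding F''_def
proof (rule sum_pos[OF _ indices_nonempty(1)])
  fix i assume i: "i \<in> {1..p}"
  have "e \<in> J"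
    using assms Iset_subset_Jset by blast
  with a_pos[OF i] have "0 < a i * G'' e"
    using G''_pos by simp
  with Iset_denominator_neg[OF assms i]
  have "0 < a i * G'' e / (a i * G e - lam)^2
      - 2 * (a i * G' e) * (a i * G' e) / (a i * G e - lam)^3"
    by (rule neg_inverse_second_deriv_pos)
  with a_pos[OF i] omega_pos[OF i] show "0 < a i * \<omega> i * (a i * G'' e / (a i * G e - lam)^2
      - 2 * (a i * G' e) * (a i * G' e) / (a i * G e - lam)^3)"
    by (intro mult_pos_pos)
qed simp

lemma strict_convex_Ffun: "strict_convex_on (I lam) (F lam)"
  using convex_Iset Ffun_has_real_derivative F'_has_real_derivative F''_pos
  by (rule strict_convex_on_second_derivI)

lemma deriv2_Ffun_pos: "e \<in> I lam \<Longrightarrow> 0 < deriv (deriv (F lam)) e"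
  using deriv_deriv_eqI[OF open_Iset _ Ffun_has_real_derivative F'_has_real_derivative] F''_pos
  by simp

end

theorem lemma3p8:
  fixes \<gamma> :: real and p n :: nat and a \<omega> b \<pi> :: "nat \<Rightarrow> real"
  assumes "\<gamma> > 0"
    and "\<forall>i\<in>{1..p}. a i > 0" and "\<forall>i\<in>{1..p}. \<omega> i > 0" and "(\<Sum>i=1..p. \<omega> i) = 1"
    and "\<forall>j\<in>{1..n}. b j > 0" and "\<forall>j\<in>{1..n}. \<pi> j > 0" and "(\<Sum>j=1..n. \<pi> j) = 1"
  shows "\<forall>lam::real. lam > 0 \<longrightarrow>
           strict_convex_on (Iset \<gamma> p a n b \<pi> lam) (Ffun \<gamma> p a \<omega> n b \<pi> lam)
         \<and> (\<forall>e\<in>Iset \<gamma> p a n b \<pi> lam. deriv (deriv (Ffun \<gamma> p a \<omega> n b \<pi> lam)) e > 0)"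
proof -
  interpret mixture_parameters \<gamma> p n a \<omega> b \<pi>
    using assms by unfold_locales auto
  show ?thesis
    using strict_convex_Ffun deriv2_Ffun_pos by blast
qed

end
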